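(* Consider the MaxWeight scheduling system described in the context, with $\boldsymbol\lambda^{(\epsilon)}=\boldsymbol\lambda^{(k)}-\epsilon\mathbf c^{(k)}$, and let $\overline{\mathbf S}$ be the service vector selected by MaxWeight in a slot when the queue-length vector is $\overline{\mathbf Q}^{(\epsilon)}$ (stationary). Then for any $r'>1$ there exist constants $\beta_2<\infty$ and $\epsilon_0>0$, independent of $\epsilon$, such that for all $\epsilon\in(0,\epsilon_0)$, $$\mathbb E\Big[\big(b^{(k)}-\langle\mathbf c^{(k)},\overline{\mathbf S}\rangle\big)^{r'}\Big]\le\beta_2\,\epsilon .$$
   Context: Scheduling system: time is slotted; there are $N$ queues. Arrivals $A_n(t)$ are independent across $n$, i.i.d. over time, nonnegative integer-valued with $A_n(t)\le A_{max}$, with mean vector $\boldsymbol\lambda^{(\epsilon)}$. $\mathcal S\subset\mathbb Z_{\ge0}^N$ is a finite set of feasible service vectors with entries at most $S_{max}$. In each slot a service vector $\mathbf S(t)\in\mathcal S$ is chosen, and $Q_n(t+1)=Q_n(t)+A_n(t)-S_n(t)+U_n(t)$ with $U_n(t)=\max(S_n(t)-A_n(t)-Q_n(t),0)$. The capacity region $\mathcal R=\mathrm{ConvexHull}(\mathcal S)$ is the polyhedron $\{\mathbf r\ge0:\langle\mathbf c^{(j)},\mathbf r\rangle\le b^{(j)},\ j=1,\dots,K\}$, where each $\mathbf c^{(j)}\in\mathbb R^N_{\ge0}$ has Euclidean norm $1$ and $b^{(j)}>0$. The $k$th face is $\mathcal F^{(k)}=\{\mathbf r\in\mathcal R:\langle\mathbf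 c^{(k)},\mathbf r\rangle=b^{(k)}\}$; a face index $k$ and a point $\boldsymbol\lambda^{(k)}$ in the relative interior of $\mathcal F^{(k)}$ are fixed. MaxWeight policy: $\mathbf S(t)$ is chosen uniformly at random from $\arg\max_{\mathbf S\in\mathcal S}\langle\mathbf Q(t),\mathbf S\rangle$. $\overline{\mathbf Q}^{(\epsilon)}$ is distributed according to the stationary distribution of the queue-length chain under MaxWeight. *)

theory Defs
  imports "HOL-Analysis.Analysis" "HOL-Probability.Probability"
begin

definition realvec :: "('n::finite \<Rightarrow> nat) \<Rightarrow> real ^ 'n" where
  "realvec s = (\<chi> i. real (s i))"

definition wt :: "('n::finite \<Rightarrow> nat) \<Rightarrow> ('n \<Rightarrow> nat) \<Rightarrow> nat" where
  "wt q s = (\<Sum>i\<in>UNIV. q i * s i)"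

definition mw_set :: "('n::finite \<Rightarrow> nat) set \<Rightarrow> ('n \<Rightarrow> nat) \<Rightarrow> ('n \<Rightarrow> nat) set" where
  "mw_set S q = {s \<in> S. \<forall>s'\<in>S. wt q s' \<le> wt q s}"

definition mw_service :: "('n::finite \<Rightarrow> nat) set \<Rightarrow> ('n \<Rightarrow> nat) \<Rightarrow> ('n \<Rightarrow> nat) pmf" where
  "mw_service S q = pmf_of_set (mw_set S q)"

definition arrivals :: "('n::finite \<Rightarrow> nat pmf) \<Rightarrow> ('n \<Rightarrow> nat) pmf" where
  "arrivals A = Pi_pmf UNIV 0 A"

text \<open>One-slot transition: Q(t+1) = Q + A - S + U = max(Q + A - S, 0) (nat subtraction).\<close>
definition mw_step :: "('n::finite \<Rightarrow> nat pmf) \<Rightarrow> ('n \<Rightarrow> nat) set \<Rightarrow> ('n \<Rightarrow> nat) \<Rightarrow> ('n \<Rightarrow> nat) pmf" where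
  "mw_step A S q =
     bind_pmf (arrivals A) (\<lambda>a. bind_pmf (mw_service S q) (\<lambda>s. return_pmf (\<lambda>i. q i + a i - s i)))"

definition stationary :: "('n::finite \<Rightarrow> nat pmf) \<Rightarrow> ('n \<Rightarrow> nat) set \<Rightarrow> ('n \<Rightarrow> nat) pmf \<Rightarrow> bool" where
  "stationary A S \<pi> \<longleftrightarrow> bind_pmf \<pi> (mw_step A S) = \<pi>"

definition polyhedron :: "nat \<Rightarrow> (nat \<Rightarrow> real ^ 'n::finite) \<Rightarrow> (nat \<Rightarrow> real) \<Rightarrow> (real ^ 'n) set" where
  "polyhedron K c b = {r. (\<forall>i. 0 \<le> r $ i) \<and> (\<forall>j<K. c j \<bullet> r \<le> b j)}"

end

theory Submission
  imports Defs
begin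

text \<open>Stationarity forces every queue to be served at least at its arrival rate. The truncated
queue length min(Q_i, m + A_max) has the same law before and after a slot, but whenever
Q_i \<le> m it grows by the full arrival minus the service; hence P(Q_i \<le> m) E[A_i] \<le> E[S_i],
and letting m \<rightarrow> \<infinity> gives E[A_i] \<le> E[S_i]. Pairing with c^(k) \<ge> 0 yields
E\<langle>c^(k), S\<rangle> \<ge> \<langle>c^(k), \<lambda>^(k) - \<epsilon> c^(k)\<rangle> = b^(k) - \<epsilon>. Every schedule lies in the capacity
region, so the gap b^(k) - \<langle>c^(k), S\<rangle> lies in [0, b^(k)] and its r'-th power is at most
(b^(k))^(r'-1) times the gap, whose mean is at most \<epsilon>.\<close>

lemma integrable_measure_pmf_bounded:
  fixes f :: "'a \<Rightarrow> real"
  assumes "\<And>x. x \<in> set_pmf M \<Longrightarrow> \<bar>f x\<bar> \<le> B"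
  shows "integrable (measure_pmf M) f"
  by (rule measure_pmf.integrable_const_bound[where B=B]) (auto simp: AE_measure_pmf_iff assms)

lemma measure_pmf_expectation_mono:
  fixes f g :: "'a \<Rightarrow> real"
  assumes "\<And>x. x \<in> set_pmf M \<Longrightarrow> f x \<le> g x"
    and "\<And>x. x \<in> set_pmf M \<Longrightarrow> \<bar>f x\<bar> \<le> B" and "\<And>x. x \<in> set_pmf M \<Longrightarrow> \<bar>g x\<bar> \<le> B"
  shows "measure_pmf.expectation M f \<le> measure_pmf.expectation M g"
  using assms by (intro integral_mono_AE AE_pmfI integrable_measure_pmf_bounded) auto

lemma measure_pmf_expectation_abs_le:
  fixes f :: "'a \<Rightarrow> real"
  assumes "\<And>x. x \<in> set_pmf M \<Longrightarrow> \<bar>f x\<bar> \<le> B"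
  shows "\<bar>measure_pmf.expectation M f\<bar> \<le> B"
proof -
  have "measure_pmf.expectation M f \<le> measure_pmf.expectation M (\<lambda>_. B)"
    "measure_pmf.expectation M (\<lambda>_. - B) \<le> measure_pmf.expectation M f"
    using assms by (intro measure_pmf_expectation_mono[where B="\<bar>B\<bar>"]; force)+
  then show ?thesis by simp
qed

lemma integral_bind_pmf_bounded:
  fixes f :: "'b \<Rightarrow> real"
  assumes "\<And>x y. x \<in> set_pmf M \<Longrightarrow> y \<in> set_pmf (N x) \<Longrightarrow> \<bar>f y\<bar> \<le> B"
  shows "measure_pmf.expectation (bind_pmf M N) f
           = measure_pmf.expectation M (\<lambda>x. measure_pmf.expectation (N x) f)"
proof -
  \<comment> \<open>Clipping f to [-B, B] changes nothing on the supports and makes it globally bounded,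
      as the general bind theorem for Bochner integrals requires.\<close>
  define g where "g y = max (- B) (min B (f y))" for y
  have "measure_pmf.expectation (bind_pmf M N) f = measure_pmf.expectation (bind_pmf M N) g"
    by (intro integral_cong_AE AE_pmfI) (auto simp: g_def dest!: assms)
  also have "\<dots> = measure_pmf.expectation M (\<lambda>x. measure_pmf.expectation (N x) g)"
    unfolding measure_pmf_bind
    by (rule integral_bind[where K="count_space UNIV" and B="\<bar>B\<bar>" and B'=1])
       (auto simp: g_def measure_pmf_in_subprob_space measure_pmf.emeasure_space_1
             intro!: measure_pmf.finite_measure)
  also have "\<dots> = measure_pmf.expectation M (\<lambda>x. measure_pmf.expectation (N x) f)"
    by (intro integral_cong_AE AE_pmfI integral_cong_AE[where M="measure_pmf (N _)"])
       (auto simp: g_def dest!: assms)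
  finally show ?thesis .
qed

lemma measure_pmf_expectation_powr_le:
  fixes f :: "'a \<Rightarrow> real"
  assumes "\<And>x. x \<in> set_pmf M \<Longrightarrow> 0 \<le> f x \<and> f x \<le> y" and "1 < r"
  shows "measure_pmf.expectation M (\<lambda>x. f x powr r) \<le> y powr (r - 1) * measure_pmf.expectation M f"
proof -
  have "f x powr r \<le> y powr (r - 1) * f x" if "x \<in> set_pmf M" for x
  proof (cases "f x = 0")
    case False
    have "f x powr r = f x powr ((r - 1) + 1)" by simp
    also have "\<dots> = f x powr (r - 1) * f x"
      using False assms that by (simp only: powr_add powr_one)
    also have "\<dots> \<le> y powr (r - 1) * f x"
      using assms that by (intro mult_right_mono powr_mono2) auto
    finally show ?thesis .
  qed (use assms in simp)
  moreover have "integrable M (\<lambda>x. f x powr r)"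
    using assms by (intro integrable_measure_pmf_bounded[where B="y powr r"]) (auto intro: powr_mono2)
  moreover have "integrable M f"
    using assms by (intro integrable_measure_pmf_bounded[where B=y]) auto
  ultimately have "measure_pmf.expectation M (\<lambda>x. f x powr r)
                     \<le> measure_pmf.expectation M (\<lambda>x. y powr (r - 1) * f x)"
    by (intro integral_mono_AE AE_pmfI) auto
  then show ?thesis by simp
qed

lemma mw_set_nonempty:
  assumes "finite S" "S \<noteq> {}"
  shows "mw_set S q \<noteq> {}"
proof -
  have "Max (wt q ` S) \<in> wt q ` S" using assms by (intro Max_in) auto
  then obtain s where "s \<in> S" "wt q s = Max (wt q ` S)" by auto
  then have "s \<in> mw_set S q" using assms by (auto simp: mw_set_def)
  then show ?thesis by blast
qed

lemma set_pmf_mw_service: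
  assumes "finite S" "S \<noteq> {}"
  shows "set_pmf (mw_service S q) \<subseteq> S"
proof -
  have "finite (mw_set S q)" using assms(1) by (auto simp: mw_set_def)
  then show ?thesis
    using mw_set_nonempty[OF assms] by (auto simp: mw_service_def mw_set_def)
qed

lemma map_pmf_arrivals_component: "map_pmf (\<lambda>a. a i) (arrivals A) = A i"
  unfolding arrivals_def by (simp add: Pi_pmf_component)

lemma set_pmf_arrivals_component:
  assumes "a \<in> set_pmf (arrivals A)" shows "a i \<in> set_pmf (A i)"
  using assms set_map_pmf[of "\<lambda>a. a i" "arrivals A"] by (auto simp: map_pmf_arrivals_component)

lemma expectation_arrivals_component:
  "measure_pmf.expectation (arrivals A) (\<lambda>a. real (a i)) = measure_pmf.expectation (A i) real"
  using integral_map_pmf[of "\<lambda>a. a i" "arrivals A" real] by (simp add: map_pmf_arrivals_component)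

lemma expectation_mw_step:
  fixes f :: "('n::finite \<Rightarrow> nat) \<Rightarrow> real"
  assumes "\<And>q'. \<bar>f q'\<bar> \<le> B"
  shows "measure_pmf.expectation (mw_step A S q) f
           = measure_pmf.expectation (arrivals A)
               (\<lambda>a. measure_pmf.expectation (mw_service S q) (\<lambda>s. f (\<lambda>j. q j + a j - s j)))"
  unfolding mw_step_def
  by (simp add: assms integral_bind_pmf_bounded[where B=B])

text \<open>The queue is truncated so that the test function stays bounded, hence integrable under
any stationary law; the cap m + A_max is high enough that a queue with Q_i \<le> m gains its
whole arrival.\<close>
lemma truncated_queue_increment:
  fixes q a s m Amax :: nat
  assumes "a \<le> Amax"
  shows "real (min q (m + Amax)) + of_bool (q \<le> m) * real a - real s
           \<le> real (min (q + a - s) (m + Amax))"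
  using assms by (cases "s \<le> q + a") (auto simp: of_nat_diff min_def)

lemma mw_step_truncated_queue_drift:
  fixes A :: "'n::finite \<Rightarrow> nat pmf" and S :: "('n \<Rightarrow> nat) set" and i :: 'n and m :: nat
  assumes S_fin: "finite S" and S_ne: "S \<noteq> {}"
    and S_bd: "\<forall>s\<in>S. \<forall>i. s i \<le> Smax"
    and A_bd: "\<forall>i. set_pmf (A i) \<subseteq> {..Amax}"
  defines "h \<equiv> \<lambda>q. real (min (q i) (m + Amax))"
  shows "h q + of_bool (q i \<le> m) * measure_pmf.expectation (A i) real
           - measure_pmf.expectation (mw_service S q) (\<lambda>s. real (s i))
         \<le> measure_pmf.expectation (mw_step A S q) h"
proof -
  define B where "B = real (m + Amax + Amax + Smax)"
  have svc: "s i \<le> Smax" if "s \<in> set_pmf (mw_service S q)" for s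
    using that set_pmf_mw_service[OF S_fin S_ne] S_bd by blast
  have arr: "a i \<le> Amax" if "a \<in> set_pmf (arrivals A)" for a
    using set_pmf_arrivals_component[OF that] A_bd by blast
  have h_bd: "\<bar>h q'\<bar> \<le> B" for q'
    by (simp add: h_def B_def)
  have lower_bd: "\<bar>h q + of_bool (q i \<le> m) * real (a i) - real (s i)\<bar> \<le> B"
    if "a \<in> set_pmf (arrivals A)" "s \<in> set_pmf (mw_service S q)" for a s
    using arr[OF that(1)] svc[OF that(2)] by (auto simp: h_def B_def)
  have increment: "h q + of_bool (q i \<le> m) * real (a i) - real (s i) \<le> h (\<lambda>j. q j + a j - s j)"
    if "a \<in> set_pmf (arrivals A)" for a s
    using truncated_queue_increment[OF arr[OF that], of "q i" m "s i"] by (simp add: h_def)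
  have "h q + of_bool (q i \<le> m) * measure_pmf.expectation (A i) real
          - measure_pmf.expectation (mw_service S q) (\<lambda>s. real (s i))
      = measure_pmf.expectation (arrivals A) (\<lambda>a. measure_pmf.expectation (mw_service S q)
          (\<lambda>s. h q + of_bool (q i \<le> m) * real (a i) - real (s i)))"
    using svc arr
    by (simp add: expectation_arrivals_component[symmetric]
                  integrable_measure_pmf_bounded[where B=Smax]
                  integrable_measure_pmf_bounded[where B=Amax])
  also have "\<dots> \<le> measure_pmf.expectation (arrivals A)
      (\<lambda>a. measure_pmf.expectation (mw_service S q) (\<lambda>s. h (\<lambda>j. q j + a j - s j)))"
    using increment lower_bd h_bd
    by (intro measure_pmf_expectation_mono[where B=B] measure_pmf_expectation_abs_le)
  also have "\<dots> = measure_pmf.expectation (mw_step A S q) h"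
    by (rule expectation_mw_step[symmetric]) (rule h_bd)
  finally show ?thesis .
qed

lemma stationary_prob_mult_arrival_rate_le_service_rate:
  fixes A :: "'n::finite \<Rightarrow> nat pmf" and S :: "('n \<Rightarrow> nat) set"
  assumes S_fin: "finite S" and S_ne: "S \<noteq> {}"
    and S_bd: "\<forall>s\<in>S. \<forall>i. s i \<le> Smax"
    and A_bd: "\<forall>i. set_pmf (A i) \<subseteq> {..Amax}"
    and stat: "stationary A S \<pi>"
  shows "measure_pmf.prob \<pi> {q. q i \<le> m} * measure_pmf.expectation (A i) real
         \<le> measure_pmf.expectation (bind_pmf \<pi> (mw_service S)) (\<lambda>s. real (s i))"
proof -
  define h where "h q = real (min (q i) (m + Amax))" for q :: "'n \<Rightarrow> nat"
  define \<mu> where "\<mu> = measure_pmf.expectation (A i) real"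
  define e where "e q = measure_pmf.expectation (mw_service S q) (\<lambda>s. real (s i))" for q
  have svc: "s i \<le> Smax" if "s \<in> set_pmf (mw_service S q)" for s q
    using that set_pmf_mw_service[OF S_fin S_ne] S_bd by blast
  have h_bd: "\<bar>h q\<bar> \<le> m + Amax" for q
    by (simp add: h_def)
  have e_bd: "\<bar>e q\<bar> \<le> Smax" for q
    unfolding e_def using svc by (intro measure_pmf_expectation_abs_le) auto
  have drift: "h q + of_bool (q i \<le> m) * \<mu> - e q \<le> measure_pmf.expectation (mw_step A S q) h" for q
    unfolding h_def \<mu>_def e_def by (rule mw_step_truncated_queue_drift[OF S_fin S_ne S_bd A_bd])
  have "\<bar>h q + of_bool (q i \<le> m) * \<mu> - e q\<bar> \<le> m + Amax + \<bar>\<mu>\<bar> + Smax" for q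
    using h_bd[of q] e_bd[of q] by (auto simp: abs_le_iff)
  then have "integrable \<pi> (\<lambda>q. h q + of_bool (q i \<le> m) * \<mu> - e q)"
    by (intro integrable_measure_pmf_bounded)
  moreover have "integrable \<pi> (\<lambda>q. measure_pmf.expectation (mw_step A S q) h)"
    using h_bd by (intro integrable_measure_pmf_bounded measure_pmf_expectation_abs_le)
  ultimately have "measure_pmf.expectation \<pi> (\<lambda>q. h q + of_bool (q i \<le> m) * \<mu> - e q)
          \<le> measure_pmf.expectation \<pi> (\<lambda>q. measure_pmf.expectation (mw_step A S q) h)"
    by (intro integral_mono_AE AE_pmfI drift)
  also have "\<dots> = measure_pmf.expectation (bind_pmf \<pi> (mw_step A S)) h"
    by (rule integral_bind_pmf_bounded[symmetric]) (rule h_bd)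
  also have "\<dots> = measure_pmf.expectation \<pi> h"
    using stat by (simp add: stationary_def)
  finally have balance: "measure_pmf.expectation \<pi> (\<lambda>q. h q + of_bool (q i \<le> m) * \<mu> - e q)
                           \<le> measure_pmf.expectation \<pi> h" .
  have "(\<lambda>q. of_bool (q i \<le> m) :: real) = indicator {q. q i \<le> m}"
    by (auto simp: indicator_def)
  with balance show ?thesis
    using h_bd e_bd svc
    by (simp add: e_def \<mu>_def integral_bind_pmf_bounded[where B=Smax]
                  integrable_measure_pmf_bounded[where B="m + Amax"]
                  integrable_measure_pmf_bounded[where B=Smax]
                  integrable_measure_pmf_bounded[where B=1])
qed

lemma stationary_arrival_rate_le_service_rate:
  fixes A :: "'n::finite \<Rightarrow> nat pmf" and S :: "('n \<Rightarrow> nat) set"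
  assumes "finite S" and "S \<noteq> {}"
    and "\<forall>s\<in>S. \<forall>i. s i \<le> Smax"
    and "\<forall>i. set_pmf (A i) \<subseteq> {..Amax}"
    and "stationary A S \<pi>"
  shows "measure_pmf.expectation (A i) real
         \<le> measure_pmf.expectation (bind_pmf \<pi> (mw_service S)) (\<lambda>s. real (s i))"
proof -
  have "(\<lambda>m. measure_pmf.prob \<pi> {q. q i \<le> m}) \<longlonglongrightarrow> measure_pmf.prob \<pi> (\<Union>m. {q. q i \<le> m})"
    by (rule measure_pmf.finite_Lim_measure_incseq) (auto simp: incseq_def)
  moreover have "(\<Union>m. {q::'n \<Rightarrow> nat. q i \<le> m}) = UNIV" by auto
  ultimately have "(\<lambda>m. measure_pmf.prob \<pi> {q. q i \<le> m} * measure_pmf.expectation (A i) real)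
      \<longlonglongrightarrow> 1 * measure_pmf.expectation (A i) real"
    by (intro tendsto_mult tendsto_const) simp
  then show ?thesis
    using stationary_prob_mult_arrival_rate_le_service_rate[OF assms]
    by (intro LIMSEQ_le_const2) auto
qed

lemma stationary_weighted_arrival_rate_le_service_rate:
  fixes A :: "'n::finite \<Rightarrow> nat pmf" and S :: "('n \<Rightarrow> nat) set"
  assumes S_fin: "finite S" and S_ne: "S \<noteq> {}"
    and S_bd: "\<forall>s\<in>S. \<forall>i. s i \<le> Smax"
    and A_bd: "\<forall>i. set_pmf (A i) \<subseteq> {..Amax}"
    and stat: "stationary A S \<pi>"
    and w_nonneg: "\<forall>i. 0 \<le> w $ i"
  shows "(\<Sum>i\<in>UNIV. w $ i * measure_pmf.expectation (A i) real)
         \<le> measure_pmf.expectation (bind_pmf \<pi> (mw_service S)) (\<lambda>s. w \<bullet> realvec s)"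
proof -
  let ?T = "bind_pmf \<pi> (mw_service S)"
  have service_bd: "s i \<le> Smax" if "s \<in> set_pmf ?T" for s i
    using that set_pmf_mw_service[OF S_fin S_ne] S_bd by auto
  have "(\<Sum>i\<in>UNIV. w $ i * measure_pmf.expectation (A i) real)
          \<le> (\<Sum>i\<in>UNIV. w $ i * measure_pmf.expectation ?T (\<lambda>s. real (s i)))"
    using w_nonneg stationary_arrival_rate_le_service_rate[OF assms(1-5)]
    by (intro sum_mono mult_left_mono) auto
  also have "\<dots> = measure_pmf.expectation ?T (\<lambda>s. \<Sum>i\<in>UNIV. w $ i * real (s i))"
    using service_bd
    by (subst Bochner_Integration.integral_sum)
       (auto intro!: integrable_measure_pmf_bounded[where B=Smax])
  finally show ?thesis by (simp add: inner_vec_def realvec_def)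
qed

lemma inner_realvec_nonneg:
  assumes "\<forall>i. 0 \<le> w $ i"
  shows "0 \<le> w \<bullet> realvec s"
  using assms by (simp add: inner_vec_def realvec_def sum_nonneg)

lemma stationary_expected_slack_le:
  fixes A :: "'n::finite \<Rightarrow> nat pmf" and S :: "('n \<Rightarrow> nat) set"
  assumes S_fin: "finite S" and S_ne: "S \<noteq> {}"
    and S_bd: "\<forall>s\<in>S. \<forall>i. s i \<le> Smax"
    and A_bd: "\<forall>i. set_pmf (A i) \<subseteq> {..Amax}"
    and stat: "stationary A S \<pi>"
    and w_nonneg: "\<forall>i. 0 \<le> w $ i"
    and slack: "\<forall>s\<in>S. w \<bullet> realvec s \<le> \<beta>"
  shows "measure_pmf.expectation (bind_pmf \<pi> (mw_service S)) (\<lambda>s. \<beta> - w \<bullet> realvec s)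
         \<le> \<beta> - (\<Sum>i\<in>UNIV. w $ i * measure_pmf.expectation (A i) real)"
proof -
  let ?T = "bind_pmf \<pi> (mw_service S)"
  have "\<bar>w \<bullet> realvec s\<bar> \<le> \<beta>" if "s \<in> set_pmf ?T" for s
    using that set_pmf_mw_service[OF S_fin S_ne] slack inner_realvec_nonneg[OF w_nonneg, of s]
    by auto
  then have "measure_pmf.expectation ?T (\<lambda>s. \<beta> - w \<bullet> realvec s)
               = \<beta> - measure_pmf.expectation ?T (\<lambda>s. w \<bullet> realvec s)"
    by (subst Bochner_Integration.integral_diff)
       (auto intro!: integrable_measure_pmf_bounded[where B=\<beta>])
  then show ?thesis
    using stationary_weighted_arrival_rate_le_service_rate[OF S_fin S_ne S_bd A_bd stat w_nonneg]
    by simp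
qed

lemma inner_realvec_le_of_capacity_region:
  assumes "convex hull (realvec ` S) = polyhedron K c b" and "j < K" and "s \<in> S"
  shows "c j \<bullet> realvec s \<le> b j"
proof -
  have "realvec s \<in> polyhedron K c b"
    unfolding assms(1)[symmetric] using assms(3) by (intro hull_inc imageI)
  then show ?thesis
    using assms(2) by (simp add: polyhedron_def)
qed

lemma inner_shift_along_unit_normal:
  fixes c :: "'a::real_inner"
  assumes "norm c = 1" and "c \<bullet> x = b"
  shows "c \<bullet> (x - \<epsilon> *\<^sub>R c) = b - \<epsilon>"
  using assms by (simp add: inner_diff_right power2_norm_eq_inner[symmetric])

theorem claim1:
  fixes S :: "('n::finite \<Rightarrow> nat) set"
    and Smax Amax :: nat
    and K k :: nat
    and c :: "nat \<Rightarrow> real ^ 'n"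
    and b :: "nat \<Rightarrow> real"
    and lamk :: "real ^ 'n"
    and A :: "real \<Rightarrow> 'n \<Rightarrow> nat pmf"
    and emax :: real
    and r' :: real
  assumes S_fin: "finite S" and S_ne: "S \<noteq> {}"
    and S_bd: "\<forall>s\<in>S. \<forall>i. s i \<le> Smax"
    and cap: "convex hull (realvec ` S) = polyhedron K c b"
    and c_nonneg: "\<forall>j<K. \<forall>i. 0 \<le> c j $ i"
    and c_norm: "\<forall>j<K. norm (c j) = 1"
    and b_pos: "\<forall>j<K. 0 < b j"
    and k_lt: "k < K"
    and lamk_face: "lamk \<in> rel_interior {r \<in> polyhedron K c b. c k \<bullet> r = b k}"
    and emax_pos: "0 < emax"
    and A_bd: "\<forall>\<epsilon>. 0 < \<epsilon> \<and> \<epsilon> < emax \<longrightarrow> (\<forall>i. set_pmf (A \<epsilon> i) \<subseteq> {..Amax})"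
    and A_mean: "\<forall>\<epsilon>. 0 < \<epsilon> \<and> \<epsilon> < emax \<longrightarrow>
        (\<forall>i. measure_pmf.expectation (A \<epsilon> i) real = lamk $ i - \<epsilon> * c k $ i)"
    and r'_gt: "1 < r'"
  shows "\<exists>\<beta>2 \<epsilon>0. 0 < \<epsilon>0 \<and> (\<forall>\<epsilon>. 0 < \<epsilon> \<and> \<epsilon> < \<epsilon>0 \<longrightarrow>
           (\<forall>\<pi>. stationary (A \<epsilon>) S \<pi> \<longrightarrow>
              measure_pmf.expectation (bind_pmf \<pi> (mw_service S))
                 (\<lambda>s. (b k - c k \<bullet> realvec s) powr r') \<le> \<beta>2 * \<epsilon>))"
proof (intro exI conjI allI impI)
  fix \<epsilon> :: real and \<pi>
  assume \<epsilon>: "0 < \<epsilon> \<and> \<epsilon> < emax" and stat: "stationary (A \<epsilon>) S \<pi>"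
  let ?T = "bind_pmf \<pi> (mw_service S)"
  have A\<epsilon>_bd: "\<forall>i. set_pmf (A \<epsilon> i) \<subseteq> {..Amax}" and ck_nonneg: "\<forall>i. 0 \<le> c k $ i"
    using A_bd \<epsilon> c_nonneg k_lt by auto
  have slack: "\<forall>s\<in>S. c k \<bullet> realvec s \<le> b k"
    using inner_realvec_le_of_capacity_region[OF cap k_lt] by blast
  have "(\<Sum>i\<in>UNIV. c k $ i * measure_pmf.expectation (A \<epsilon> i) real) = c k \<bullet> (lamk - \<epsilon> *\<^sub>R c k)"
    using A_mean \<epsilon> by (simp add: inner_vec_def)
  also have "\<dots> = b k - \<epsilon>"
    using c_norm k_lt rel_interior_subset lamk_face by (intro inner_shift_along_unit_normal) auto
  finally have mean_slack: "measure_pmf.expectation ?T (\<lambda>s. b k - c k \<bullet> realvec s) \<le> \<epsilon>"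
    using stationary_expected_slack_le[OF S_fin S_ne S_bd A\<epsilon>_bd stat ck_nonneg slack] by simp
  have "measure_pmf.expectation ?T (\<lambda>s. (b k - c k \<bullet> realvec s) powr r')
      \<le> b k powr (r' - 1) * measure_pmf.expectation ?T (\<lambda>s. b k - c k \<bullet> realvec s)"
    using set_pmf_mw_service[OF S_fin S_ne] slack inner_realvec_nonneg[OF ck_nonneg] r'_gt
    by (intro measure_pmf_expectation_powr_le) auto
  also have "\<dots> \<le> b k powr (r' - 1) * \<epsilon>"
    using mean_slack by (intro mult_left_mono) auto
  finally show "measure_pmf.expectation ?T (\<lambda>s. (b k - c k \<bullet> realvec s) powr r')
      \<le> b k powr (r' - 1) * \<epsilon>" .
qed (rule emax_pos)

end
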